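(* Let $\mathcal{H}_X$ be a Hilbert space of dimension $d$ and $\mathcal{H}_R$ a reference Hilbert space. Let $U$ be a Haar-random target unitary on $\mathcal{H}_X$. Consider sets of training inputs $S_{\mathrm{in}}=\{|\psi_{\max}\rangle,|\psi_2\rangle,\dots,|\psi_t\rangle\}\subset\mathcal{H}_X\otimes\mathcal{H}_R$ where $|\psi_{\max}\rangle$ has Schmidt decomposition $|\psi_{\max}\rangle=\sum_{k=1}^{r_{\max}}\sqrt{c_k}\,|\xi_k\rangle_X|\zeta_k\rangle_R$ (with $r_{\max}$ the maximal Schmidt rank among the inputs), and every other input satisfies $|\psi_j\rangle\in\mathcal{H}_{S_{X,\max}}\otimes\mathcal{H}_R$, where $\mathcal{H}_{S_{X,\max}}=\mathrm{span}\{|\xi_1\rangle,\dots,|\xi_{r_{\max}}\rangle\}$. Let $T_t^{\mathrm{ld}}$ be the set of all such input sets, and let $V_S$ be a hypothesis unitary on $\mathcal{H}_X$ perfectly trained on the corresponding training set $S=\{(|\psi_j\rangle,(U\otimes I)|\psi_j\rangle)\}$. Then, with $\mathbb{E}_S^{\mathrm{ld}}$ denoting the expectation over $T_t^{\mathrm{ld}}$, $$\mathbb{E}_U\big[\mathbb{E}_S^{\mathrm{ld}}[R_U(V_S)]\big]\;\ge\;1-\frac{r_{\max}^2+d+1}{d(d+1)}.$$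
   Context: Perfect training means $|\langle\psi_j|(U^\dagger V_S\otimes I)|\psi_j\rangle|=1$ for all training inputs. The risk is $R_U(V)=\int\big(1-|\langle x|U^\dagger V|x\rangle|^2\big)\,dx$ over Haar-random pure states $|x\rangle\in\mathcal{H}_X$, equivalently $R_U(V)=1-\frac{d+|\mathrm{Tr}[U^\dagger V]|^2}{d(d+1)}$. $\mathbb{E}_U$ is over the Haar measure on $\mathcal{U}(d)$; $\mathbb{E}_S^{\mathrm{ld}}$ is over the normalized restriction of the product Fubini–Study measure to $T_t^{\mathrm{ld}}$. *)

theory Defs
  imports "HOL-Probability.Probability"
begin

text \<open>H_X = complex^'d (d = CARD('d)), H_R = complex^'r; H_X \<otimes> H_R = complex^('d \<times> 'r).
Operators on H_X are matrices complex^'d^'d.\<close>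

definition cinner :: "complex^'n::finite \<Rightarrow> complex^'n \<Rightarrow> complex" where
  "cinner x y = (\<Sum>i\<in>UNIV. cnj (x $ i) * y $ i)"

definition cadj :: "complex^'n::finite^'n \<Rightarrow> complex^'n^'n" where
  "cadj A = (\<chi> i j. cnj (A $ j $ i))"

definition unitary :: "complex^'n::finite^'n \<Rightarrow> bool" where
  "unitary U \<longleftrightarrow> U ** cadj U = mat 1 \<and> cadj U ** U = mat 1"

definition mtrace :: "complex^'n::finite^'n \<Rightarrow> complex" where
  "mtrace A = (\<Sum>i\<in>UNIV. A $ i $ i)"

definition tprod :: "complex^'d::finite \<Rightarrow> complex^'r::finite \<Rightarrow> complex^('d \<times> 'r)" where
  "tprod x y = (\<chi> p. x $ fst p * y $ snd p)"

definition tens_id :: "complex^'d::finite^'d \<Rightarrow> complex^('d \<times> 'r::finite) \<Rightarrow> complex^('d \<times> 'r)" where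
  "tens_id A \<psi> = (\<chi> p. \<Sum>j\<in>UNIV. A $ fst p $ j * \<psi> $ (j, snd p))"

definition orthonormal_fam :: "(nat \<Rightarrow> complex^'n::finite) \<Rightarrow> nat \<Rightarrow> bool" where
  "orthonormal_fam e r \<longleftrightarrow> (\<forall>k<r. \<forall>l<r. cinner (e k) (e l) = (if k = l then 1 else 0))"

definition schmidt_rank :: "complex^('d::finite \<times> 'r::finite) \<Rightarrow> nat" where
  "schmidt_rank \<psi> = (LEAST n. \<exists>a b. \<psi> = (\<Sum>k<n. tprod (a k) (b k)))"

text \<open>T_t^ld for a fixed maximal Schmidt rank r: lists of t unit vectors, the first one
(psi_max) having a Schmidt decomposition with r terms sum_k sqrt(c_k) xi_k (x) zeta_k (c_k > 0),
r being the maximal Schmidt rank, and every input lying in span{xi_k} (x) H_R.\<close>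
definition T_ld :: "nat \<Rightarrow> nat \<Rightarrow> (complex^('d::finite \<times> 'r::finite)) list set" where
  "T_ld r t = {\<psi>s. length \<psi>s = t \<and> t \<ge> 1 \<and> (\<forall>\<psi>\<in>set \<psi>s. cinner \<psi> \<psi> = 1) \<and>
     schmidt_rank (\<psi>s ! 0) = r \<and> (\<forall>\<psi>\<in>set \<psi>s. schmidt_rank \<psi> \<le> r) \<and>
     (\<exists>(\<xi>::nat \<Rightarrow> complex^'d) (\<zeta>::nat \<Rightarrow> complex^'r) (c::nat \<Rightarrow> real).
        orthonormal_fam \<xi> r \<and> orthonormal_fam \<zeta> r \<and> (\<forall>k<r. c k > 0) \<and>
        \<psi>s ! 0 = (\<Sum>k<r. sqrt (c k) *\<^sub>R tprod (\<xi> k) (\<zeta> k)) \<and>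
        (\<forall>j<t. \<exists>w::nat \<Rightarrow> complex^'r. \<psi>s ! j = (\<Sum>k<r. tprod (\<xi> k) (w k))))}"

definition training_set :: "complex^'d::finite^'d \<Rightarrow> (complex^('d \<times> 'r::finite)) list
    \<Rightarrow> ((complex^('d \<times> 'r)) \<times> (complex^('d \<times> 'r))) list" where
  "training_set U \<psi>s = map (\<lambda>\<psi>. (\<psi>, tens_id U \<psi>)) \<psi>s"

definition perfectly_trained :: "complex^'d::finite^'d \<Rightarrow> complex^'d^'d \<Rightarrow> (complex^('d \<times> 'r::finite)) list \<Rightarrow> bool" where
  "perfectly_trained U V \<psi>s \<longleftrightarrow>
     (\<forall>\<psi>\<in>set \<psi>s. cmod (cinner \<psi> (tens_id (cadj U ** V) \<psi>)) = 1)"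

text \<open>Risk, in the closed form given in the paper.\<close>
definition risk :: "complex^'d::finite^'d \<Rightarrow> complex^'d^'d \<Rightarrow> real" where
  "risk U V = 1 - (real CARD('d) + (cmod (mtrace (cadj U ** V)))\<^sup>2) /
                  (real CARD('d) * (real CARD('d) + 1))"

definition haar_unitary :: "(complex^'d::finite^'d) measure \<Rightarrow> bool" where
  "haar_unitary \<mu> \<longleftrightarrow> prob_space \<mu> \<and> sets \<mu> = sets borel \<and> space \<mu> = UNIV \<and>
     (AE U in \<mu>. unitary U) \<and>
     (\<forall>W. unitary W \<longrightarrow> distr \<mu> borel (\<lambda>U. W ** U) = \<mu> \<and> distr \<mu> borel (\<lambda>U. U ** W) = \<mu>)"

end

theory Submission
  imports Defs
begin

text \<open>Perfect training on \<open>\<psi>\<^sub>m\<^sub>a\<^sub>x\<close> forces \<open>W = U\<^sup>\<dagger> V\<^sub>S\<close> to act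
  as a single phase \<open>\<omega>\<close> on \<open>span {\<xi>\<^sub>k}\<close>: for a unit vector,
  \<open>|\<langle>\<psi>\<^sub>m\<^sub>a\<^sub>x, (W \<otimes> I) \<psi>\<^sub>m\<^sub>a\<^sub>x\<rangle>| = 1\<close> forces
  \<open>(W \<otimes> I) \<psi>\<^sub>m\<^sub>a\<^sub>x = \<omega> \<psi>\<^sub>m\<^sub>a\<^sub>x\<close>, and the Schmidt decomposition
  transfers this to every \<open>\<xi>\<^sub>k\<close>.
  If a unitary \<open>G\<close> fixes \<open>span {\<xi>\<^sub>k}\<close>, replacing \<open>U\<close> by \<open>U G\<close> leaves all
  training inputs, hence the training set and \<open>V\<^sub>S\<close>, unchanged, while the Haar measure
  is invariant under \<open>U \<mapsto> U G\<close>. So the Haar expectation of the risk equals its average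
  over any finite family of such \<open>G\<close>, and the risk of \<open>U G\<close> is governed by
  \<open>|tr (G\<^sup>\<dagger> W)|\<^sup>2\<close>. Extending \<open>\<xi>\<close> to an orthonormal basis and letting \<open>G\<close>
  run through all sign changes combined with all cyclic shifts of the remaining basis
  vectors, the mean of \<open>|tr (G\<^sup>\<dagger> W)|\<^sup>2\<close> is \<open>r\<^sup>2\<close> plus a mean of squared
  matrix entries of the unitary \<open>W\<close>, which is at most \<open>r\<^sup>2 + 1\<close>.
  For \<open>r \<ge> d\<close> the bound is trivial, and Fubini exchanges the two expectations.\<close>

section \<open>Inner products and unitary matrices\<close>

lemma sum_swap3: "(\<Sum>a\<in>A. \<Sum>b\<in>B. \<Sum>c\<in>C. f a b c) = (\<Sum>c\<in>C. \<Sum>b\<in>B. \<Sum>a\<in>A. f a b c)"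
proof -
  have "(\<Sum>a\<in>A. \<Sum>b\<in>B. \<Sum>c\<in>C. f a b c) = (\<Sum>a\<in>A. \<Sum>c\<in>C. \<Sum>b\<in>B. f a b c)"
    by (intro sum.cong refl sum.swap)
  also have "\<dots> = (\<Sum>c\<in>C. \<Sum>a\<in>A. \<Sum>b\<in>B. f a b c)" by (rule sum.swap)
  also have "\<dots> = (\<Sum>c\<in>C. \<Sum>b\<in>B. \<Sum>a\<in>A. f a b c)" by (intro sum.cong refl sum.swap)
  finally show ?thesis .
qed

lemma sum_UNIV_prod:
  fixes f :: "'a::finite \<times> 'b::finite \<Rightarrow> 'c::comm_monoid_add"
  shows "(\<Sum>p\<in>UNIV. f p) = (\<Sum>a\<in>UNIV. \<Sum>b\<in>UNIV. f (a, b))"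
  by (simp add: sum.cartesian_product UNIV_Times_UNIV[symmetric] del: UNIV_Times_UNIV)

lemma cinner_add_right: "cinner x (y + z) = cinner x y + cinner x z"
  by (simp add: cinner_def distrib_left sum.distrib)

lemma cinner_diff_right: "cinner x (y - z) = cinner x y - cinner x z"
  by (simp add: cinner_def right_diff_distrib sum_subtractf)

lemma cinner_diff_left: "cinner (x - y) z = cinner x z - cinner y z"
  by (simp add: cinner_def left_diff_distrib sum_subtractf)

lemma cinner_zero_right [simp]: "cinner x 0 = 0"
  by (simp add: cinner_def)

lemma cinner_sum_right: "cinner x (\<Sum>k\<in>K. f k) = (\<Sum>k\<in>K. cinner x (f k))"
  by (induct K rule: infinite_finite_induct) (simp_all add: cinner_add_right)

lemma cinner_scale_right: "cinner x (c *s y) = c * cinner x y"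
  by (simp add: cinner_def sum_distrib_left mult.left_commute)

lemma cinner_scale_left: "cinner (c *s x) y = cnj c * cinner x y"
  by (simp add: cinner_def sum_distrib_left mult.assoc)

lemma cinner_commute: "cnj (cinner x y) = cinner y x"
  by (simp add: cinner_def mult.commute)

lemma cinner_self: "cinner x x = of_real (\<Sum>i\<in>UNIV. (cmod (x $ i))\<^sup>2)"
  unfolding cinner_def of_real_sum by (intro sum.cong refl) (subst complex_norm_square, rule mult.commute)

lemma cinner_self_eq_0_iff: "cinner x x = 0 \<longleftrightarrow> x = 0"
  by (auto simp: cinner_self vec_eq_iff sum_nonneg_eq_0_iff simp del: of_real_sum)

lemma cinner_eq_scale_if_cmod_eq_1:
  assumes x: "cinner x x = 1" and y: "cinner y y = 1" and xy: "cmod (cinner x y) = 1"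
  shows "y = cinner x y *s x"
proof -
  define l where "l = cinner x y"
  have ll: "cnj l * l = 1"
    using xy unfolding l_def by (metis complex_norm_square mult.commute of_real_1 power_one)
  have "cinner (y - l *s x) (y - l *s x) = cinner y y - l * cnj (cinner x y) - cnj l * cinner x y + cnj l * l * cinner x x"
    by (simp add: cinner_diff_left cinner_diff_right cinner_scale_left cinner_scale_right cinner_commute algebra_simps)
  also have "\<dots> = 0"
    using x y ll by (simp add: l_def[symmetric] mult.commute)
  finally show ?thesis by (simp add: l_def cinner_self_eq_0_iff)
qed

lemma cinner_matrix_vector: "cinner (A *v x) y = cinner x (cadj A *v y)"
  unfolding cinner_def matrix_vector_mult_def cadj_def
  by (simp add: sum_distrib_left sum_distrib_right mult_ac) (rule sum.swap)

lemma cadj_mult: "cadj (A ** B) = cadj B ** cadj A"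
  by (simp add: cadj_def matrix_matrix_mult_def vec_eq_iff mult.commute)

lemma cadj_cadj [simp]: "cadj (cadj A) = A"
  by (simp add: cadj_def vec_eq_iff)

lemma unitary_mult: "unitary A \<Longrightarrow> unitary B \<Longrightarrow> unitary (A ** B)"
  unfolding unitary_def cadj_mult by (metis matrix_mul_assoc matrix_mul_lid)

lemma unitary_cadj: "unitary A \<Longrightarrow> unitary (cadj A)"
  unfolding unitary_def by simp

lemma unitaryI_left: "cadj A ** A = mat 1 \<Longrightarrow> unitary A"
  unfolding unitary_def using matrix_left_right_inverse by blast

lemma unitary_cinner: "unitary A \<Longrightarrow> cinner (A *v x) (A *v y) = cinner x y"
  by (simp add: cinner_matrix_vector matrix_vector_mul_assoc unitary_def)

lemma unitary_column_norm:
  assumes "unitary A" shows "(\<Sum>q\<in>UNIV. (cmod (A $ q $ p))\<^sup>2) = 1"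
proof -
  have "cinner (axis p 1) (axis p (1::complex)) = 1"
    by (simp add: cinner_def axis_def if_distrib cong: if_cong)
  then have "cinner (A *v axis p 1) (A *v axis p 1) = 1"
    using assms by (simp only: unitary_cinner)
  moreover have "A *v axis p 1 = (\<chi> q. A $ q $ p)"
    by (simp add: matrix_vector_mult_def axis_def vec_eq_iff if_distrib cong: if_cong)
  ultimately show ?thesis by (simp only: cinner_self vec_lambda_beta of_real_eq_1_iff)
qed

lemma norm_mtrace_unitary_le:
  fixes A :: "complex^'n::finite^'n"
  assumes "unitary A" shows "cmod (mtrace A) \<le> real CARD('n)"
proof -
  have "cmod (A $ p $ p) \<le> 1" for p
  proof -
    have "(cmod (A $ p $ p))\<^sup>2 \<le> (\<Sum>q\<in>UNIV. (cmod (A $ q $ p))\<^sup>2)"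
      by (rule member_le_sum) auto
    then show ?thesis using unitary_column_norm[OF assms] by (simp add: power_le_one_iff)
  qed
  then have "(\<Sum>p\<in>UNIV. cmod (A $ p $ p)) \<le> (\<Sum>p\<in>(UNIV::'n set). 1)"
    by (intro sum_mono)
  then show ?thesis
    unfolding mtrace_def using norm_sum[of "\<lambda>p. A $ p $ p" UNIV] by simp
qed

lemma tens_id_add: "tens_id A (x + y) = tens_id A x + tens_id A y"
  by (simp add: tens_id_def vec_eq_iff distrib_left sum.distrib)

lemma tens_id_sum: "tens_id A (\<Sum>k\<in>K. f k) = (\<Sum>k\<in>K. tens_id A (f k))"
  by (induct K rule: infinite_finite_induct) (simp_all add: tens_id_add, simp_all add: tens_id_def vec_eq_iff)

lemma tens_id_scaleR: "tens_id A (a *\<^sub>R x) = a *\<^sub>R tens_id A x"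
  by (simp add: tens_id_def vec_eq_iff) (simp add: scaleR_conv_of_real sum_distrib_left mult.left_commute)

lemma tens_id_tprod: "tens_id A (tprod x y) = tprod (A *v x) y"
  by (simp add: tens_id_def tprod_def vec_eq_iff matrix_vector_mult_def sum_distrib_right mult.assoc)

lemma tens_id_mult: "tens_id (A ** B) \<psi> = tens_id A (tens_id B \<psi>)"
proof -
  have "(\<Sum>j\<in>UNIV. (\<Sum>k\<in>UNIV. A $ a $ k * B $ k $ j) * \<psi> $ (j, b)) =
        (\<Sum>k\<in>UNIV. A $ a $ k * (\<Sum>j\<in>UNIV. B $ k $ j * \<psi> $ (j, b)))" for a b
    by (simp add: sum_distrib_left sum_distrib_right mult.assoc) (rule sum.swap)
  then show ?thesis by (simp add: tens_id_def matrix_matrix_mult_def vec_eq_iff)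
qed

lemma tens_id_one: "tens_id (mat 1) \<psi> = \<psi>"
  unfolding tens_id_def mat_def by (simp add: vec_eq_iff of_bool_def[symmetric])

lemma cinner_tens_id: "cinner (tens_id A x) y = cinner x (tens_id (cadj A) y)"
proof -
  have "cinner (tens_id A x) y = (\<Sum>a\<in>UNIV. \<Sum>b\<in>UNIV. \<Sum>j\<in>UNIV. cnj (A $ a $ j) * cnj (x $ (j, b)) * y $ (a, b))"
    unfolding cinner_def tens_id_def by (subst sum_UNIV_prod) (simp add: sum_distrib_right)
  also have "\<dots> = (\<Sum>j\<in>UNIV. \<Sum>b\<in>UNIV. \<Sum>a\<in>UNIV. cnj (A $ a $ j) * cnj (x $ (j, b)) * y $ (a, b))"
    by (rule sum_swap3)
  also have "\<dots> = cinner x (tens_id (cadj A) y)"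
    unfolding cinner_def tens_id_def cadj_def by (subst sum_UNIV_prod) (simp add: sum_distrib_left mult_ac)
  finally show ?thesis .
qed

lemma unitary_tens_id_cinner: "unitary U \<Longrightarrow> cinner (tens_id U x) (tens_id U y) = cinner x y"
  by (simp add: cinner_tens_id unitary_def tens_id_one flip: tens_id_mult)

section \<open>Perfect training acts as a phase on the Schmidt support\<close>

text \<open>\<open>partial_cinner z \<psi>\<close> is \<open>(I \<otimes> \<langle>z|) \<psi>\<close>.\<close>
definition partial_cinner :: "complex^'r::finite \<Rightarrow> complex^('d::finite \<times> 'r) \<Rightarrow> complex^'d" where
  "partial_cinner z \<psi> = (\<chi> i. \<Sum>b\<in>UNIV. cnj (z $ b) * \<psi> $ (i, b))"

lemma partial_cinner_add: "partial_cinner z (x + y) = partial_cinner z x + partial_cinner z y"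
  by (simp add: partial_cinner_def vec_eq_iff distrib_left sum.distrib)

lemma partial_cinner_sum: "partial_cinner z (\<Sum>k\<in>K. f k) = (\<Sum>k\<in>K. partial_cinner z (f k))"
  by (induct K rule: infinite_finite_induct)
    (simp_all add: partial_cinner_add, simp_all add: partial_cinner_def vec_eq_iff)

lemma partial_cinner_scaleR: "partial_cinner z (a *\<^sub>R x) = a *\<^sub>R partial_cinner z x"
  by (simp add: partial_cinner_def vec_eq_iff) (simp add: scaleR_conv_of_real sum_distrib_left mult.left_commute)

lemma partial_cinner_scale: "partial_cinner z (c *s x) = c *s partial_cinner z x"
  by (simp add: partial_cinner_def vec_eq_iff sum_distrib_left mult.left_commute)

lemma partial_cinner_tprod: "partial_cinner z (tprod x y) = cinner z y *s x"
  by (simp add: partial_cinner_def tprod_def cinner_def vec_eq_iff sum_distrib_left mult_ac)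

lemma partial_cinner_schmidt:
  assumes \<zeta>: "orthonormal_fam \<zeta> r" and l: "l < r"
  shows "partial_cinner (\<zeta> l) (\<Sum>k<r. c k *\<^sub>R tprod (v k) (\<zeta> k)) = c l *\<^sub>R v l"
proof -
  have "partial_cinner (\<zeta> l) (\<Sum>k<r. c k *\<^sub>R tprod (v k) (\<zeta> k)) =
        (\<Sum>k<r. c k *\<^sub>R (cinner (\<zeta> l) (\<zeta> k) *s v k))"
    by (simp add: partial_cinner_sum partial_cinner_scaleR partial_cinner_tprod)
  also have "\<dots> = (\<Sum>k<r. if k = l then c k *\<^sub>R v k else 0)"
    using \<zeta> l unfolding orthonormal_fam_def by (intro sum.cong) auto
  finally show ?thesis using l by simp
qed

text \<open>Equality in Cauchy--Schwarz forces \<open>(W \<otimes> I) \<psi> = \<omega> \<psi>\<close>; reading this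
  off the Schmidt decomposition of \<open>\<psi>\<close> term by term shows that \<open>W\<close> acts as the
  phase \<open>\<omega>\<close> on every \<open>\<xi>\<^sub>k\<close>.\<close>
lemma unit_fidelity_schmidt_phase:
  assumes W: "unitary W" and \<zeta>: "orthonormal_fam \<zeta> r" and c: "\<forall>k<r. c k > 0"
    and \<psi>: "\<psi> = (\<Sum>k<r. sqrt (c k) *\<^sub>R tprod (\<xi> k) (\<zeta> k))"
    and unit: "cinner \<psi> \<psi> = 1" and fid: "cmod (cinner \<psi> (tens_id W \<psi>)) = 1"
  shows "\<exists>\<omega>. cmod \<omega> = 1 \<and> (\<forall>k<r. W *v \<xi> k = \<omega> *s \<xi> k)"
proof -
  define \<omega> where "\<omega> = cinner \<psi> (tens_id W \<psi>)"
  have "tens_id W \<psi> = \<omega> *s \<psi>"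
    unfolding \<omega>_def using W unit fid by (intro cinner_eq_scale_if_cmod_eq_1) (simp_all add: unitary_tens_id_cinner)
  have "W *v \<xi> l = \<omega> *s \<xi> l" if l: "l < r" for l
  proof -
    have "sqrt (c l) *\<^sub>R (W *v \<xi> l) = partial_cinner (\<zeta> l) (tens_id W \<psi>)"
      by (simp add: \<psi> tens_id_sum tens_id_scaleR tens_id_tprod partial_cinner_schmidt[OF \<zeta> l])
    also have "\<dots> = sqrt (c l) *\<^sub>R (\<omega> *s \<xi> l)"
      unfolding \<open>tens_id W \<psi> = \<omega> *s \<psi>\<close>
      by (simp add: partial_cinner_scale \<psi> partial_cinner_schmidt[OF \<zeta> l])
        (simp add: vec_eq_iff scaleR_conv_of_real mult.left_commute)
    finally show ?thesis using c l by force
  qed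
  then show ?thesis using fid \<omega>_def by blast
qed

lemma T_ld_perfect_training_phase:
  fixes \<psi>s :: "(complex^('d::finite \<times> 'r::finite)) list"
  assumes \<psi>s: "\<psi>s \<in> T_ld r t"
  obtains \<xi> :: "nat \<Rightarrow> complex^'d" where "orthonormal_fam \<xi> r"
    and "\<forall>\<psi>\<in>set \<psi>s. \<exists>w. \<psi> = (\<Sum>k<r. tprod (\<xi> k) (w k))"
    and "\<And>U V. unitary U \<Longrightarrow> unitary V \<Longrightarrow> perfectly_trained U V \<psi>s \<Longrightarrow>
           \<exists>\<omega>. cmod \<omega> = 1 \<and> (\<forall>k<r. (cadj U ** V) *v \<xi> k = \<omega> *s \<xi> k)"
proof -
  obtain \<xi> \<zeta> c where \<xi>: "orthonormal_fam \<xi> r" and \<zeta>: "orthonormal_fam \<zeta> r" and c: "\<forall>k<r. c k > 0"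
    and \<psi>0: "\<psi>s ! 0 = (\<Sum>k<r. sqrt (c k) *\<^sub>R tprod (\<xi> k) (\<zeta> k))"
    and span: "\<forall>j<t. \<exists>w. \<psi>s ! j = (\<Sum>k<r. tprod (\<xi> k) (w k))"
    using \<psi>s unfolding T_ld_def by blast
  have len: "length \<psi>s = t" "t \<ge> 1" and unit: "\<forall>\<psi>\<in>set \<psi>s. cinner \<psi> \<psi> = 1"
    using \<psi>s unfolding T_ld_def by auto
  then have \<psi>0_in: "\<psi>s ! 0 \<in> set \<psi>s" by auto
  show ?thesis
  proof
    show "orthonormal_fam \<xi> r" by (rule \<xi>)
    show "\<forall>\<psi>\<in>set \<psi>s. \<exists>w. \<psi> = (\<Sum>k<r. tprod (\<xi> k) (w k))"
      using span len by (auto simp: in_set_conv_nth)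
  next
    fix U V assume "unitary U" "unitary V" "perfectly_trained U V \<psi>s"
    then show "\<exists>\<omega>. cmod \<omega> = 1 \<and> (\<forall>k<r. (cadj U ** V) *v \<xi> k = \<omega> *s \<xi> k)"
      using unit_fidelity_schmidt_phase[OF _ \<zeta> c \<psi>0] unit \<psi>0_in
      unfolding perfectly_trained_def by (simp add: unitary_mult unitary_cadj)
  qed
qed

section \<open>Orthonormal bases\<close>

lemma exists_unit_scale:
  assumes "x \<noteq> 0" shows "\<exists>c. cinner (c *s x) (c *s x) = 1"
proof -
  define s where "s = (\<Sum>i\<in>UNIV. (cmod (x $ i))\<^sup>2)"
  have "s \<noteq> 0" using assms by (metis cinner_self cinner_self_eq_0_iff of_real_0 s_def)
  moreover have "s \<ge> 0" unfolding s_def by (intro sum_nonneg) simp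
  ultimately have "s > 0" by simp
  moreover have "cinner x x = of_real s" unfolding s_def by (rule cinner_self)
  ultimately have "cinner (of_real (1 / sqrt s) *s x) (of_real (1 / sqrt s) *s x) = 1"
    by (simp add: cinner_scale_left cinner_scale_right flip: of_real_mult)
  then show ?thesis by blast
qed

text \<open>As a real vector space \<open>\<complex>\<^sup>d\<close> has dimension \<open>2d\<close>, so the \<open>2n\<close>
  vectors \<open>e\<^sub>k\<close>, \<open>i e\<^sub>k\<close> do not span it; subtracting from a vector outside
  their span its projection onto the \<open>e\<^sub>k\<close> leaves a nonzero vector orthogonal to all
  of them.\<close>
lemma exists_nonzero_orthogonal:
  fixes e :: "nat \<Rightarrow> complex^'d::finite"
  assumes e: "orthonormal_fam e n" and n: "n < CARD('d)"
  shows "\<exists>v. v \<noteq> 0 \<and> (\<forall>k<n. cinner (e k) v = 0)"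
proof -
  define S where "S = e ` {..<n} \<union> (\<lambda>k. \<i> *s e k) ` {..<n}"
  have "card S \<le> card (e ` {..<n}) + card ((\<lambda>k. \<i> *s e k) ` {..<n})"
    unfolding S_def by (rule card_Un_le)
  also have "\<dots> \<le> 2 * n"
    using card_image_le[of "{..<n}"] by (metis card_lessThan finite_lessThan add_mono mult_2)
  finally have "span S \<noteq> UNIV"
    using dim_le_card[of UNIV S] n by (auto simp: S_def)
  then obtain y where y: "y \<notin> span S" by blast
  define p where "p = (\<Sum>k<n. cinner (e k) y *s e k)"
  have "c *s e k \<in> span S" if "k < n" for c k
  proof -
    have "c *s e k = Re c *\<^sub>R e k + Im c *\<^sub>R (\<i> *s e k)"
      by (simp add: vec_eq_iff) (simp add: scaleR_conv_of_real complex_eq_iff)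
    then show ?thesis using that by (simp add: S_def span_add span_scale span_base)
  qed
  then have "p \<in> span S" unfolding p_def by (intro span_sum) blast
  have "cinner (e l) p = cinner (e l) y" if "l < n" for l
  proof -
    have "cinner (e l) p = (\<Sum>k<n. cinner (e k) y * cinner (e l) (e k))"
      by (simp add: p_def cinner_sum_right cinner_scale_right)
    also have "\<dots> = (\<Sum>k<n. if k = l then cinner (e k) y else 0)"
      using e that unfolding orthonormal_fam_def by (intro sum.cong) auto
    finally show ?thesis using that by simp
  qed
  then have "\<forall>k<n. cinner (e k) (y - p) = 0" by (simp add: cinner_diff_right)
  moreover have "y - p \<noteq> 0" using y \<open>p \<in> span S\<close> by auto
  ultimately show ?thesis by blast
qed

lemma orthonormal_fam_extend:
  fixes e :: "nat \<Rightarrow> complex^'d::finite"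
  assumes e: "orthonormal_fam e n" and n: "n < CARD('d)"
  shows "\<exists>v. orthonormal_fam (e(n := v)) (Suc n)"
proof -
  obtain v where v: "v \<noteq> 0" "\<forall>k<n. cinner (e k) v = 0"
    using exists_nonzero_orthogonal[OF e n] by blast
  obtain c where c: "cinner (c *s v) (c *s v) = 1" using exists_unit_scale[OF v(1)] by blast
  have "\<forall>k<n. cinner (e k) (c *s v) = 0" "\<forall>k<n. cinner (c *s v) (e k) = 0"
    using v(2) by (simp_all add: cinner_scale_right flip: cinner_commute[of "e _"])
  then have "orthonormal_fam (e(n := c *s v)) (Suc n)"
    using e c unfolding orthonormal_fam_def by (auto simp: less_Suc_eq)
  then show ?thesis by blast
qed

lemma orthonormal_fam_extend_basis:
  fixes \<xi> :: "nat \<Rightarrow> complex^'d::finite"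
  assumes \<xi>: "orthonormal_fam \<xi> r" and r: "r \<le> CARD('d)"
  shows "\<exists>e. orthonormal_fam e CARD('d) \<and> (\<forall>k<r. e k = \<xi> k)"
proof -
  have "\<exists>e. orthonormal_fam e n \<and> (\<forall>k<r. e k = \<xi> k)" if "r \<le> n" "n \<le> CARD('d)" for n
    using that
  proof (induction n rule: dec_induct)
    case base
    then show ?case using \<xi> by blast
  next
    case (step n)
    then obtain e where e: "orthonormal_fam e n" "\<forall>k<r. e k = \<xi> k" by auto
    then obtain v where "orthonormal_fam (e(n := v)) (Suc n)"
      using orthonormal_fam_extend step by fastforce
    moreover have "\<forall>k<r. (e(n := v)) k = \<xi> k" using e(2) step by auto
    ultimately show ?case by blast
  qed
  then show ?thesis using r by blast
qed

text \<open>Completeness of an orthonormal basis: the matrix with columns \<open>e\<^sub>k\<close> has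
  orthonormal columns, hence is unitary, hence also has orthonormal rows.\<close>
lemma orthonormal_basis_complete:
  fixes e :: "nat \<Rightarrow> complex^'d::finite"
  assumes e: "orthonormal_fam e CARD('d)"
  shows "(\<Sum>k<CARD('d). e k $ p * cnj (e k $ q)) = (if p = q then 1 else 0)"
proof -
  obtain idx :: "'d \<Rightarrow> nat" where idx: "bij_betw idx UNIV {..<CARD('d)}"
    using ex_bij_betw_finite_nat[of "UNIV :: 'd set"] by (auto simp: atLeast0LessThan)
  define B :: "complex^'d^'d" where "B = (\<chi> i j. e (idx j) $ i)"
  have "cadj B ** B = mat 1"
  proof -
    have "(cadj B ** B) $ i $ j = cinner (e (idx i)) (e (idx j))" for i j
      by (simp add: B_def cadj_def matrix_matrix_mult_def cinner_def)
    moreover have "idx i < CARD('d)" "(idx i = idx j) = (i = j)" for i j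
      using idx by (auto simp: bij_betw_def inj_on_def)
    ultimately show ?thesis
      using e by (simp add: vec_eq_iff mat_def orthonormal_fam_def)
  qed
  then have "B ** cadj B = mat 1" using unitaryI_left unitary_def by blast
  then have "(\<Sum>j\<in>UNIV. e (idx j) $ p * cnj (e (idx j) $ q)) = (if p = q then 1 else 0)"
    by (simp add: vec_eq_iff B_def cadj_def matrix_matrix_mult_def mat_def)
  then show ?thesis using sum.reindex_bij_betw[OF idx, of "\<lambda>k. e k $ p * cnj (e k $ q)"] by simp
qed

lemma orthonormal_basis_parseval:
  fixes e :: "nat \<Rightarrow> complex^'d::finite"
  assumes e: "orthonormal_fam e CARD('d)"
  shows "of_real (\<Sum>k<CARD('d). (cmod (cinner (e k) v))\<^sup>2) = cinner v v"
proof -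
  have "of_real ((cmod (cinner (e k) v))\<^sup>2) =
        (\<Sum>p\<in>UNIV. \<Sum>q\<in>UNIV. cnj (v $ p) * v $ q * (e k $ p * cnj (e k $ q)))" for k
    by (subst complex_norm_square) (simp add: cinner_def cnj_sum sum_product mult_ac, rule sum.swap)
  then have "of_real (\<Sum>k<CARD('d). (cmod (cinner (e k) v))\<^sup>2) =
        (\<Sum>k<CARD('d). \<Sum>p\<in>UNIV. \<Sum>q\<in>UNIV. cnj (v $ p) * v $ q * (e k $ p * cnj (e k $ q)))"
    by (simp only: of_real_sum)
  also have "\<dots> = (\<Sum>p\<in>UNIV. \<Sum>q\<in>UNIV. cnj (v $ p) * v $ q * (\<Sum>k<CARD('d). e k $ p * cnj (e k $ q)))"
    by (simp add: sum_distrib_left) (subst sum.swap, intro sum.cong refl sum.swap)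
  also have "\<dots> = cinner v v"
    by (simp add: orthonormal_basis_complete[OF e] cinner_def if_distrib cong: if_cong)
  finally show ?thesis .
qed

lemma sum_cmod_cinner_basis_le:
  fixes e :: "nat \<Rightarrow> complex^'d::finite"
  assumes e: "orthonormal_fam e CARD('d)" and J: "J \<subseteq> {..<CARD('d)}" and v: "cinner v v = 1"
  shows "(\<Sum>k\<in>J. (cmod (cinner (e k) v))\<^sup>2) \<le> 1"
proof -
  have "(\<Sum>k\<in>J. (cmod (cinner (e k) v))\<^sup>2) \<le> (\<Sum>k<CARD('d). (cmod (cinner (e k) v))\<^sup>2)"
    using J by (intro sum_mono2) auto
  also have "\<dots> = 1"
    using orthonormal_basis_parseval[OF e, of v] v by (metis of_real_eq_1_iff)
  finally show ?thesis .
qed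

section \<open>A finite family of unitaries fixing a subspace\<close>

lemma cmod_parallelogram: "(cmod (c - y))\<^sup>2 + (cmod (c + y))\<^sup>2 = 2 * (cmod c)\<^sup>2 + 2 * (cmod y)\<^sup>2"
  unfolding cmod_power2 by (simp add: power2_eq_square algebra_simps)

text \<open>Averaging over independent random signs kills all cross terms.\<close>
lemma sum_sign_vectors_cmod_square:
  fixes y :: "'a \<Rightarrow> complex"
  assumes "finite J"
  shows "(\<Sum>s\<in>PiE J (\<lambda>_. {-1, 1::real}). (cmod (c + (\<Sum>j\<in>J. of_real (s j) * y j)))\<^sup>2)
           = 2 ^ card J * ((cmod c)\<^sup>2 + (\<Sum>j\<in>J. (cmod (y j))\<^sup>2))"
  using assms
proof (induction J arbitrary: c rule: finite_induct)
  case empty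
  then show ?case by simp
next
  case (insert x J)
  let ?P = "PiE J (\<lambda>_. {-1, 1::real})"
  let ?Y = "\<Sum>j\<in>J. (cmod (y j))\<^sup>2"
  have "(\<Sum>s\<in>PiE (insert x J) (\<lambda>_. {-1, 1::real}). (cmod (c + (\<Sum>j\<in>insert x J. of_real (s j) * y j)))\<^sup>2)
      = (\<Sum>(b, g)\<in>{-1, 1} \<times> ?P. (cmod (c + (\<Sum>j\<in>insert x J. of_real ((g(x := b)) j) * y j)))\<^sup>2)"
    unfolding PiE_insert_eq
    by (subst sum.reindex[OF inj_combinator[OF insert.hyps(2)]]) (simp add: case_prod_unfold)
  also have "\<dots> = (\<Sum>b\<in>{-1, 1}. \<Sum>g\<in>?P. (cmod ((c + of_real b * y x) + (\<Sum>j\<in>J. of_real (g j) * y j)))\<^sup>2)"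
  proof -
    have "(\<Sum>j\<in>J. of_real ((g(x := b)) j) * y j) = (\<Sum>j\<in>J. of_real (g j) * y j)" for g and b :: real
      using insert.hyps(2) by (intro sum.cong) auto
    then show ?thesis
      unfolding sum.cartesian_product[symmetric]
      by (simp only: sum.insert[OF insert.hyps]) (simp add: algebra_simps)
  qed
  also have "\<dots> = 2 ^ card J * ((cmod (c - y x))\<^sup>2 + ?Y) + 2 ^ card J * ((cmod (c + y x))\<^sup>2 + ?Y)"
    by (simp add: insert.IH)
  also have "\<dots> = 2 ^ card J * (((cmod (c - y x))\<^sup>2 + (cmod (c + y x))\<^sup>2) + 2 * ?Y)"
    by (simp add: algebra_simps)
  also have "\<dots> = 2 ^ card (insert x J) * ((cmod c)\<^sup>2 + (\<Sum>j\<in>insert x J. (cmod (y j))\<^sup>2))"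
    unfolding cmod_parallelogram using insert.hyps by (simp add: algebra_simps)
  finally show ?case .
qed

lemma bij_betw_add_mod: "bij_betw (\<lambda>i. (i + a) mod m) {..<m} {..<(m::nat)}"
proof (cases "m = 0")
  case False
  define b where "b = a mod m"
  have b: "b \<le> m" using False by (simp add: b_def less_imp_le)
  have undo: "((i + k) mod m + (m - k)) mod m = i" if "i < m" "k \<le> m" for i k
  proof -
    have "((i + k) mod m + (m - k)) mod m = (i + k + (m - k)) mod m" by (rule mod_add_left_eq)
    also have "\<dots> = i" using that by simp
    finally show ?thesis .
  qed
  have "bij_betw (\<lambda>i. (i + b) mod m) {..<m} {..<m}"
  proof (rule bij_betwI[where g = "\<lambda>i. (i + (m - b)) mod m"])
    show "\<And>i. i \<in> {..<m} \<Longrightarrow> ((i + (m - b)) mod m + b) mod m = i"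
      using undo[of _ "m - b"] b by simp
  qed (use False undo b in auto)
  moreover have "(i + a) mod m = (i + b) mod m" for i by (simp add: b_def mod_add_right_eq)
  ultimately show ?thesis by simp
qed (simp add: bij_betw_def)

definition basis_monomial ::
    "(nat \<Rightarrow> complex^'d::finite) \<Rightarrow> (nat \<Rightarrow> nat) \<Rightarrow> (nat \<Rightarrow> complex) \<Rightarrow> complex^'d^'d" where
  "basis_monomial e \<tau> \<sigma> = (\<chi> p q. \<Sum>j<CARD('d). \<sigma> j * e (\<tau> j) $ p * cnj (e j $ q))"

lemma basis_monomial_apply:
  fixes e :: "nat \<Rightarrow> complex^'d::finite"
  assumes e: "orthonormal_fam e CARD('d)" and k: "k < CARD('d)"
  shows "basis_monomial e \<tau> \<sigma> *v e k = \<sigma> k *s e (\<tau> k)"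
proof -
  have "basis_monomial e \<tau> \<sigma> *v e k = (\<Sum>j<CARD('d). (\<sigma> j * cinner (e j) (e k)) *s e (\<tau> j))"
    unfolding basis_monomial_def matrix_vector_mult_def cinner_def
    by (simp add: vec_eq_iff sum_distrib_left sum_distrib_right mult_ac) (intro allI sum.swap)
  also have "\<dots> = (\<Sum>j<CARD('d). if j = k then \<sigma> k *s e (\<tau> k) else 0)"
    using e k unfolding orthonormal_fam_def by (intro sum.cong) auto
  finally show ?thesis using k by simp
qed

lemma unitary_basis_monomial:
  fixes e :: "nat \<Rightarrow> complex^'d::finite"
  assumes e: "orthonormal_fam e CARD('d)"
    and \<tau>: "bij_betw \<tau> {..<CARD('d)} {..<CARD('d)}" and \<sigma>: "\<forall>j<CARD('d). cmod (\<sigma> j) = 1"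
  shows "unitary (basis_monomial e \<tau> \<sigma>)"
proof (rule unitaryI_left)
  let ?n = "CARD('d)"
  have \<tau>e: "cinner (e (\<tau> j)) (e (\<tau> k)) = (if j = k then 1 else 0)" if "j < ?n" "k < ?n" for j k
  proof -
    have "\<tau> j < ?n" "\<tau> k < ?n" "\<tau> j = \<tau> k \<longleftrightarrow> j = k"
      using \<tau> that by (auto simp: bij_betw_def inj_on_def)
    then show ?thesis using e unfolding orthonormal_fam_def by simp
  qed
  have \<sigma>\<sigma>: "\<sigma> j * cnj (\<sigma> j) = 1" if "j < ?n" for j
    using \<sigma> that by (metis complex_norm_square of_real_1 power_one)
  have "(cadj (basis_monomial e \<tau> \<sigma>) ** basis_monomial e \<tau> \<sigma>) $ p $ q = mat 1 $ p $ q" for p q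
  proof -
    have "(cadj (basis_monomial e \<tau> \<sigma>) ** basis_monomial e \<tau> \<sigma>) $ p $ q =
          (\<Sum>x\<in>UNIV. (\<Sum>j<?n. cnj (\<sigma> j) * e j $ p * cnj (e (\<tau> j) $ x)) *
                      (\<Sum>k<?n. \<sigma> k * cnj (e k $ q) * e (\<tau> k) $ x))"
      by (simp add: basis_monomial_def cadj_def matrix_matrix_mult_def cnj_sum mult_ac)
    also have "\<dots> = (\<Sum>j<?n. \<Sum>k<?n.
        cnj (\<sigma> j) * \<sigma> k * e j $ p * cnj (e k $ q) * cinner (e (\<tau> j)) (e (\<tau> k)))"
      by (simp add: sum_product cinner_def sum_distrib_left mult_ac sum.swap[of _ UNIV "{..<?n}"])
    also have "\<dots> = (\<Sum>j<?n. e j $ p * cnj (e j $ q))"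
      by (intro sum.cong refl) (simp add: \<tau>e if_distrib \<sigma>\<sigma> mult_ac cong: if_cong)
    also have "\<dots> = mat 1 $ p $ q"
      by (simp add: orthonormal_basis_complete[OF e] mat_def)
    finally show ?thesis .
  qed
  then show "cadj (basis_monomial e \<tau> \<sigma>) ** basis_monomial e \<tau> \<sigma> = mat 1"
    by (simp add: vec_eq_iff)
qed

lemma mtrace_cadj_basis_monomial:
  fixes e :: "nat \<Rightarrow> complex^'d::finite"
  shows "mtrace (cadj (basis_monomial e \<tau> \<sigma>) ** W) = (\<Sum>j<CARD('d). cnj (\<sigma> j) * cinner (e (\<tau> j)) (W *v e j))"
proof -
  have "mtrace (cadj (basis_monomial e \<tau> \<sigma>) ** W) =
        (\<Sum>p\<in>UNIV. \<Sum>x\<in>UNIV. \<Sum>j<CARD('d). cnj (\<sigma> j) * cnj (e (\<tau> j) $ x) * (W $ x $ p * e j $ p))"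
    by (simp add: mtrace_def basis_monomial_def cadj_def matrix_matrix_mult_def cnj_sum sum_distrib_left sum_distrib_right mult_ac)
  also have "\<dots> =
      (\<Sum>j<CARD('d). \<Sum>x\<in>UNIV. \<Sum>p\<in>UNIV. cnj (\<sigma> j) * cnj (e (\<tau> j) $ x) * (W $ x $ p * e j $ p))"
    by (rule sum_swap3)
  finally show ?thesis
    by (simp add: cinner_def matrix_vector_mult_def sum_distrib_left mult_ac)
qed

definition cyclic_shift :: "nat \<Rightarrow> nat \<Rightarrow> nat \<Rightarrow> nat \<Rightarrow> nat" where
  "cyclic_shift r n a j = (if j < r then j else r + (j - r + a) mod (n - r))"

definition sign_flip :: "nat \<Rightarrow> (nat \<Rightarrow> real) \<Rightarrow> nat \<Rightarrow> complex" where
  "sign_flip r s j = (if j < r then 1 else of_real (s j))"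

lemma cyclic_shift_less: "j < n \<Longrightarrow> cyclic_shift r n a j < n"
proof (cases "j < r")
  case False
  moreover assume "j < n"
  ultimately have "(j - r + a) mod (n - r) < n - r" by simp
  moreover have "cyclic_shift r n a j = r + (j - r + a) mod (n - r)"
    using False by (simp add: cyclic_shift_def)
  ultimately show ?thesis using False \<open>j < n\<close> by linarith
qed (simp add: cyclic_shift_def)

lemma bij_betw_cyclic_shift: "bij_betw (cyclic_shift r n a) {..<n} {..<n}"
proof -
  let ?m = "n - r"
  have inj_mod: "inj_on (\<lambda>i. (i + a) mod ?m) {..<?m}"
    using bij_betw_add_mod bij_betw_imp_inj_on by blast
  have low: "cyclic_shift r n a j = j" if "j < r" for j
    using that by (simp add: cyclic_shift_def)
  have high: "cyclic_shift r n a j = r + (j - r + a) mod ?m" if "\<not> j < r" for j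
    using that by (simp add: cyclic_shift_def)
  have "inj_on (cyclic_shift r n a) {..<n}"
  proof (rule inj_onI)
    fix j k assume j: "j \<in> {..<n}" and k: "k \<in> {..<n}" and eq: "cyclic_shift r n a j = cyclic_shift r n a k"
    consider "j < r" "k < r" | "j < r" "\<not> k < r" | "\<not> j < r" "k < r" | "\<not> j < r" "\<not> k < r"
      by blast
    then show "j = k"
    proof cases
      case 4
      then have "(j - r + a) mod ?m = (k - r + a) mod ?m" using eq by (simp add: high)
      then have "j - r = k - r" by (rule inj_onD[OF inj_mod]) (use j k 4 in auto)
      then show ?thesis using 4 by simp
    qed (use eq in \<open>simp_all add: low high\<close>)
  qed
  moreover have "cyclic_shift r n a ` {..<n} \<subseteq> {..<n}"
    using cyclic_shift_less by blast
  ultimately show ?thesis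
    using endo_inj_surj[of "{..<n}"] by (simp add: bij_betw_def)
qed

lemma sum_cyclic_shift_orbit:
  assumes "r \<le> j" "j < n"
  shows "(\<Sum>a<n - r. g (cyclic_shift r n a j)) = (\<Sum>i\<in>{r..<n}. g i)"
proof -
  have "(\<Sum>a<n - r. g (cyclic_shift r n a j)) = (\<Sum>a<n - r. (g \<circ> plus r) ((a + (j - r)) mod (n - r)))"
    using assms by (intro sum.cong) (auto simp: cyclic_shift_def add.commute)
  also have "\<dots> = (\<Sum>i<n - r. (g \<circ> plus r) i)"
    by (rule sum.reindex_bij_betw[OF bij_betw_add_mod])
  also have "\<dots> = (\<Sum>i\<in>{r..<n}. g i)"
    by (simp add: sum.atLeastLessThan_shift_0[of g r n] atLeast0LessThan)
  finally show ?thesis .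
qed

lemma mtrace_cadj_shift_sign:
  fixes e :: "nat \<Rightarrow> complex^'d::finite"
  assumes e: "orthonormal_fam e CARD('d)" and r: "r \<le> CARD('d)"
    and eig: "\<forall>k<r. W *v e k = \<omega> *s e k"
  shows "mtrace (cadj (basis_monomial e (cyclic_shift r CARD('d) a) (sign_flip r s)) ** W) =
    of_nat r * \<omega> + (\<Sum>j\<in>{r..<CARD('d)}. of_real (s j) * cinner (e (cyclic_shift r CARD('d) a j)) (W *v e j))"
proof -
  define f where "f j = cnj (sign_flip r s j) * cinner (e (cyclic_shift r CARD('d) a j)) (W *v e j)" for j
  have "(\<Sum>j<CARD('d). f j) = (\<Sum>j<r. f j) + (\<Sum>j\<in>{r..<CARD('d)}. f j)"
    using sum.atLeastLessThan_concat[of 0 r "CARD('d)" f] r by (simp add: atLeast0LessThan)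
  also have "(\<Sum>j<r. f j) = (\<Sum>j<r. \<omega>)"
  proof (rule sum.cong)
    fix j assume j: "j \<in> {..<r}"
    then have "cinner (e j) (e j) = 1" using e r unfolding orthonormal_fam_def by auto
    then show "f j = \<omega>"
      using j eig by (simp add: f_def sign_flip_def cyclic_shift_def cinner_scale_right)
  qed simp
  also have "(\<Sum>j\<in>{r..<CARD('d)}. f j) =
      (\<Sum>j\<in>{r..<CARD('d)}. of_real (s j) * cinner (e (cyclic_shift r CARD('d) a j)) (W *v e j))"
    by (intro sum.cong) (auto simp: f_def sign_flip_def)
  finally show ?thesis
    by (simp add: mtrace_cadj_basis_monomial f_def)
qed

lemma sum_cmod_mtrace_shift_sign_le:
  fixes e :: "nat \<Rightarrow> complex^'d::finite"
  assumes e: "orthonormal_fam e CARD('d)" and r: "r \<le> CARD('d)"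
    and W: "unitary W" and \<omega>: "cmod \<omega> = 1" and eig: "\<forall>k<r. W *v e k = \<omega> *s e k"
  shows "(\<Sum>(s, a)\<in>PiE {r..<CARD('d)} (\<lambda>_. {-1, 1}) \<times> {..<CARD('d) - r}.
            (cmod (mtrace (cadj (basis_monomial e (cyclic_shift r CARD('d) a) (sign_flip r s)) ** W)))\<^sup>2)
         \<le> 2 ^ (CARD('d) - r) * real (CARD('d) - r) * ((real r)\<^sup>2 + 1)"
proof -
  let ?m = "CARD('d) - r" and ?J = "{r..<CARD('d)}"
  let ?P = "PiE ?J (\<lambda>_. {-1, 1::real})"
  define y where "y a j = cinner (e (cyclic_shift r CARD('d) a j)) (W *v e j)" for a j
  have "(\<Sum>(s, a)\<in>?P \<times> {..<?m}.
          (cmod (mtrace (cadj (basis_monomial e (cyclic_shift r CARD('d) a) (sign_flip r s)) ** W)))\<^sup>2)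
      = (\<Sum>a<?m. \<Sum>s\<in>?P. (cmod (of_nat r * \<omega> + (\<Sum>j\<in>?J. of_real (s j) * y a j)))\<^sup>2)"
    by (simp add: sum.cartesian_product[symmetric] mtrace_cadj_shift_sign[OF e r eig] y_def)
      (rule sum.swap)
  also have "\<dots> = (\<Sum>a<?m. 2 ^ ?m * ((real r)\<^sup>2 + (\<Sum>j\<in>?J. (cmod (y a j))\<^sup>2)))"
    by (simp add: sum_sign_vectors_cmod_square norm_mult \<omega>)
  also have "\<dots> = 2 ^ ?m * (real ?m * (real r)\<^sup>2 + (\<Sum>j\<in>?J. \<Sum>a<?m. (cmod (y a j))\<^sup>2))"
    by (simp add: sum.distrib sum_distrib_left[symmetric] sum.swap[of _ "{..<?m}"])
  also have "\<dots> \<le> 2 ^ ?m * (real ?m * (real r)\<^sup>2 + real ?m)"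
  proof -
    have "(\<Sum>a<?m. (cmod (y a j))\<^sup>2) \<le> 1" if j: "j \<in> ?J" for j
    proof -
      have "cinner (W *v e j) (W *v e j) = 1"
        using W e j unfolding orthonormal_fam_def by (simp add: unitary_cinner)
      then have "(\<Sum>i\<in>?J. (cmod (cinner (e i) (W *v e j)))\<^sup>2) \<le> 1"
        by (intro sum_cmod_cinner_basis_le[OF e]) auto
      then show ?thesis
        using j sum_cyclic_shift_orbit[of r j "CARD('d)" "\<lambda>i. (cmod (cinner (e i) (W *v e j)))\<^sup>2"]
        by (simp add: y_def)
    qed
    then have "(\<Sum>j\<in>?J. \<Sum>a<?m. (cmod (y a j))\<^sup>2) \<le> real ?m"
      using sum_mono[of ?J "\<lambda>j. \<Sum>a<?m. (cmod (y a j))\<^sup>2" "\<lambda>_. 1"] by simp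
    then show ?thesis by simp
  qed
  also have "\<dots> = 2 ^ ?m * real ?m * ((real r)\<^sup>2 + 1)"
    by (simp add: algebra_simps)
  finally show ?thesis .
qed

text \<open>The finite family replacing the Haar average over the unitaries that fix
  \<open>span {\<xi>\<^sub>k}\<close>: extend \<open>\<xi>\<close> to an orthonormal basis and take, on the
  complement, all cyclic shifts of the remaining basis vectors combined with all sign
  changes.\<close>
lemma exists_unitary_design_fixing:
  fixes \<xi> :: "nat \<Rightarrow> complex^'d::finite"
  assumes \<xi>: "orthonormal_fam \<xi> r" and r: "r < CARD('d)"
  obtains I :: "((nat \<Rightarrow> real) \<times> nat) set" and G :: "(nat \<Rightarrow> real) \<times> nat \<Rightarrow> complex^'d^'d"
  where "finite I" "I \<noteq> {}" "\<And>x. x \<in> I \<Longrightarrow> unitary (G x)"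
    "\<And>x k. x \<in> I \<Longrightarrow> k < r \<Longrightarrow> G x *v \<xi> k = \<xi> k"
    "\<And>W \<omega>. unitary W \<Longrightarrow> cmod \<omega> = 1 \<Longrightarrow> \<forall>k<r. W *v \<xi> k = \<omega> *s \<xi> k \<Longrightarrow>
       (\<Sum>x\<in>I. (cmod (mtrace (cadj (G x) ** W)))\<^sup>2) \<le> real (card I) * ((real r)\<^sup>2 + 1)"
proof -
  obtain e where e: "orthonormal_fam e CARD('d)" and e\<xi>: "\<forall>k<r. e k = \<xi> k"
    using orthonormal_fam_extend_basis[OF \<xi>] r by auto
  let ?m = "CARD('d) - r"
  define I where "I = PiE {r..<CARD('d)} (\<lambda>_. {-1, 1::real}) \<times> {..<?m}"
  define G where "G = (\<lambda>(s, a). basis_monomial e (cyclic_shift r CARD('d) a) (sign_flip r s))"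
  have cI: "card I = 2 ^ ?m * ?m"
    by (simp add: I_def card_cartesian_product card_PiE numeral_2_eq_2)
  show ?thesis
  proof
    show "finite I" by (simp add: I_def finite_PiE)
    show "I \<noteq> {}" using r by (simp add: I_def PiE_eq_empty_iff lessThan_empty_iff)
  next
    fix x assume "x \<in> I"
    then obtain s a where x: "x = (s, a)" and s: "s \<in> PiE {r..<CARD('d)} (\<lambda>_. {-1, 1::real})"
      by (auto simp: I_def)
    have "cmod (sign_flip r s j) = 1" if "j < CARD('d)" for j
    proof (cases "j < r")
      case False
      then have "s j \<in> {-1, 1}" using s that by (auto simp: PiE_def Pi_def)
      then show ?thesis using False by (auto simp: sign_flip_def)
    qed (simp add: sign_flip_def)
    then show "unitary (G x)"
      unfolding x G_def using e r by (simp add: unitary_basis_monomial bij_betw_cyclic_shift)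
    fix k assume k: "k < r"
    then have "G x *v e k = e k"
      using e r by (simp add: x G_def basis_monomial_apply sign_flip_def cyclic_shift_def)
    then show "G x *v \<xi> k = \<xi> k" using e\<xi> k by simp
  next
    fix W \<omega> assume W: "unitary W" and \<omega>: "cmod \<omega> = 1" and "\<forall>k<r. W *v \<xi> k = \<omega> *s \<xi> k"
    then have "\<forall>k<r. W *v e k = \<omega> *s e k" using e\<xi> by simp
    from sum_cmod_mtrace_shift_sign_le[OF e less_imp_le[OF r] W \<omega> this]
    show "(\<Sum>x\<in>I. (cmod (mtrace (cadj (G x) ** W)))\<^sup>2) \<le> real (card I) * ((real r)\<^sup>2 + 1)"
      unfolding cI by (simp add: I_def G_def case_prod_unfold)
  qed
qed

section \<open>Risk and Haar averages\<close>

lemma risk_bounds: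
  fixes U V :: "complex^'d::finite^'d"
  assumes "unitary U" "unitary V"
  shows "0 \<le> risk U V" "risk U V \<le> 1"
proof -
  define d where "d = real CARD('d)"
  define x where "x = cmod (mtrace (cadj U ** V))"
  have "x \<le> d"
    unfolding x_def d_def using assms by (intro norm_mtrace_unitary_le unitary_mult unitary_cadj)
  then have "d + x\<^sup>2 \<le> d * (d + 1)"
    using power_mono[of x d 2] by (simp add: x_def power2_eq_square algebra_simps)
  moreover have "d * (d + 1) > 0" by (simp add: d_def)
  ultimately have "0 \<le> (d + x\<^sup>2) / (d * (d + 1))" "(d + x\<^sup>2) / (d * (d + 1)) \<le> 1"
    by (simp_all add: d_def)
  moreover have "risk U V = 1 - (d + x\<^sup>2) / (d * (d + 1))" by (simp add: risk_def d_def x_def)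
  ultimately show "0 \<le> risk U V" "risk U V \<le> 1" by linarith+
qed

lemma risk_bound_nonpos:
  assumes "CARD('d::finite) \<le> r"
  shows "1 - (real r ^ 2 + real CARD('d) + 1) / (real CARD('d) * (real CARD('d) + 1)) \<le> 0"
proof -
  define d where "d = real CARD('d)"
  have "d * (d + 1) \<le> real r ^ 2 + d + 1"
    using assms mult_mono[of d "real r" d "real r"] by (simp add: d_def power2_eq_square algebra_simps)
  moreover have "d * (d + 1) > 0" by (simp add: d_def)
  ultimately show ?thesis by (simp add: d_def[symmetric] field_simps)
qed

lemma sum_risk_mult_right_ge:
  fixes U Y :: "complex^'d::finite^'d"
  assumes "(\<Sum>x\<in>I. (cmod (mtrace (cadj (G x) ** (cadj U ** Y))))\<^sup>2) \<le> real (card I) * B"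
  shows "real (card I) * (1 - (B + real CARD('d)) / (real CARD('d) * (real CARD('d) + 1)))
           \<le> (\<Sum>x\<in>I. risk (U ** G x) Y)"
proof -
  define d where "d = real CARD('d)"
  define S where "S = (\<Sum>x\<in>I. (cmod (mtrace (cadj (G x) ** (cadj U ** Y))))\<^sup>2)"
  have D: "d * (d + 1) > 0" by (simp add: d_def)
  have "real (card I) * (1 - (B + d) / (d * (d + 1))) = real (card I) - (real (card I) * d + real (card I) * B) / (d * (d + 1))"
    using D by (simp add: field_simps)
  also have "\<dots> \<le> real (card I) - (real (card I) * d + S) / (d * (d + 1))"
    using assms D by (simp add: S_def divide_right_mono)
  also have "\<dots> = (\<Sum>x\<in>I. risk (U ** G x) Y)"
    by (simp add: S_def risk_def d_def cadj_mult matrix_mul_assoc sum_subtractf sum.distrib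
        flip: sum_divide_distrib)
  finally show ?thesis by (simp add: d_def)
qed

lemma training_set_mult_right_fixing:
  assumes G: "\<forall>k<r. G *v \<xi> k = \<xi> k"
    and span: "\<forall>\<psi>\<in>set \<psi>s. \<exists>w. \<psi> = (\<Sum>k<r. tprod (\<xi> k) (w k))"
  shows "training_set (U ** G) \<psi>s = training_set U \<psi>s"
proof -
  have "tens_id G \<psi> = \<psi>" if "\<psi> \<in> set \<psi>s" for \<psi>
    using span that G by (auto simp: tens_id_sum tens_id_tprod)
  then show ?thesis by (simp add: training_set_def tens_id_mult)
qed

lemma haar_integral_mult_right:
  fixes h :: "complex^'d::finite^'d \<Rightarrow> real"
  assumes haar: "haar_unitary \<mu>" and G: "unitary G" and h: "h \<in> borel_measurable \<mu>"
  shows "(\<integral>U. h (U ** G) \<partial>\<mu>) = integral\<^sup>L \<mu> h"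
    and "integrable \<mu> h \<Longrightarrow> integrable \<mu> (\<lambda>U. h (U ** G))"
proof -
  have sets: "sets \<mu> = sets borel" and inv: "distr \<mu> borel (\<lambda>U. U ** G) = \<mu>"
    using haar G unfolding haar_unitary_def by auto
  have "continuous_on UNIV (\<lambda>U::complex^'d^'d. U ** G)"
    unfolding matrix_matrix_mult_def by (intro continuous_on_vec_lambda continuous_on_sum continuous_intros)
  then have "(\<lambda>U. U ** G) \<in> measurable \<mu> borel"
    using borel_measurable_continuous_onI measurable_cong_sets[OF sets refl] by blast
  moreover have "h \<in> borel_measurable borel"
    using h measurable_cong_sets[OF sets refl] by blast
  ultimately show "(\<integral>U. h (U ** G) \<partial>\<mu>) = integral\<^sup>L \<mu> h"
    and "integrable \<mu> h \<Longrightarrow> integrable \<mu> (\<lambda>U. h (U ** G))"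
    using integral_distr[of "\<lambda>U. U ** G" \<mu> borel h] integrable_distr_eq[of "\<lambda>U. U ** G" \<mu> borel h]
    by (simp_all add: inv)
qed

lemma (in prob_space) integral_ge_of_average:
  fixes f :: "'a \<Rightarrow> real" and g :: "'i \<Rightarrow> 'a \<Rightarrow> real"
  assumes I: "finite I" "I \<noteq> {}"
    and int: "\<And>x. x \<in> I \<Longrightarrow> integrable M (g x)"
    and eq: "\<And>x. x \<in> I \<Longrightarrow> integral\<^sup>L M (g x) = integral\<^sup>L M f"
    and avg: "AE \<omega> in M. real (card I) * c \<le> (\<Sum>x\<in>I. g x \<omega>)"
  shows "c \<le> integral\<^sup>L M f"
proof -
  have "real (card I) * c \<le> (\<integral>\<omega>. (\<Sum>x\<in>I. g x \<omega>) \<partial>M)"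
    using int avg by (intro integral_ge_const) auto
  also have "\<dots> = real (card I) * integral\<^sup>L M f"
    using int eq by (simp add: Bochner_Integration.integral_sum)
  finally show ?thesis using I by (simp add: card_gt_0_iff)
qed

lemma (in pair_prob_space) iterated_integral_ge_const:
  fixes f :: "'a \<times> 'b \<Rightarrow> real"
  assumes f: "f \<in> borel_measurable (M1 \<Otimes>\<^sub>M M2)"
    and bound: "\<And>x. x \<in> space M1 \<Longrightarrow> AE y in M2. norm (f (x, y)) \<le> B"
    and ge: "\<And>x. x \<in> space M1 \<Longrightarrow> c \<le> (\<integral>y. f (x, y) \<partial>M2)"
  shows "c \<le> (\<integral>y. (\<integral>x. f (x, y) \<partial>M1) \<partial>M2)"
proof -
  have "AE z in M1 \<Otimes>\<^sub>M M2. norm (f z) \<le> B"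
    using f bound by (intro AE_pair_measure) (auto intro: AE_I2)
  then have int: "integrable (M1 \<Otimes>\<^sub>M M2) f"
    using f by (rule P.integrable_const_bound)
  then have "(\<integral>y. (\<integral>x. f (x, y) \<partial>M1) \<partial>M2) = (\<integral>x. (\<integral>y. f (x, y) \<partial>M2) \<partial>M1)"
    using Fubini_integral[of "\<lambda>x y. f (x, y)"] by simp
  moreover have "c \<le> (\<integral>x. (\<integral>y. f (x, y) \<partial>M2) \<partial>M1)"
    using integrable_fst'[OF int] ge by (intro M1.integral_ge_const) (auto intro: AE_I2)
  ultimately show ?thesis by simp
qed

lemma haar_AE_risk_bounds:
  fixes Y :: "complex^'d::finite^'d \<Rightarrow> complex^'d^'d"
  assumes haar: "haar_unitary \<mu>" and Y: "\<And>U. unitary U \<Longrightarrow> unitary (Y U)"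
  shows "AE U in \<mu>. 0 \<le> risk U (Y U)" "AE U in \<mu>. norm (risk U (Y U)) \<le> 1"
proof -
  have "0 \<le> risk U (Y U) \<and> norm (risk U (Y U)) \<le> 1" if "unitary U" for U
    using risk_bounds[OF that Y[OF that]] by simp
  then show "AE U in \<mu>. 0 \<le> risk U (Y U)" "AE U in \<mu>. norm (risk U (Y U)) \<le> 1"
    using haar unfolding haar_unitary_def by (auto elim!: eventually_mono)
qed

lemma haar_risk_integrable:
  fixes Y :: "complex^'d::finite^'d \<Rightarrow> complex^'d^'d"
  assumes haar: "haar_unitary \<mu>" and Y: "\<And>U. unitary U \<Longrightarrow> unitary (Y U)"
    and meas: "(\<lambda>U. risk U (Y U)) \<in> borel_measurable \<mu>"
  shows "integrable \<mu> (\<lambda>U. risk U (Y U))" "0 \<le> (\<integral>U. risk U (Y U) \<partial>\<mu>)"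
proof -
  interpret prob_space \<mu> using haar by (simp add: haar_unitary_def)
  have bounds: "AE U in \<mu>. 0 \<le> risk U (Y U)" "AE U in \<mu>. norm (risk U (Y U)) \<le> 1"
    using haar_AE_risk_bounds[OF haar, where Y = Y] Y by blast+
  show "integrable \<mu> (\<lambda>U. risk U (Y U))" by (rule integrable_const_bound[OF bounds(2) meas])
  show "0 \<le> (\<integral>U. risk U (Y U) \<partial>\<mu>)" by (rule integral_nonneg_AE[OF bounds(1)])
qed

lemma haar_expected_risk_ge:
  fixes \<mu> :: "(complex^'d::finite^'d) measure"
    and V :: "((complex^('d \<times> 'r::finite)) \<times> (complex^('d \<times> 'r))) list \<Rightarrow> complex^'d^'d"
  assumes haar: "haar_unitary \<mu>" and \<psi>s: "\<psi>s \<in> T_ld r t"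
    and trained: "\<And>U. unitary U \<Longrightarrow>
       unitary (V (training_set U \<psi>s)) \<and> perfectly_trained U (V (training_set U \<psi>s)) \<psi>s"
    and meas: "(\<lambda>U. risk U (V (training_set U \<psi>s))) \<in> borel_measurable \<mu>"
  shows "1 - (real r ^ 2 + real CARD('d) + 1) / (real CARD('d) * (real CARD('d) + 1))
           \<le> (\<integral>U. risk U (V (training_set U \<psi>s)) \<partial>\<mu>)"
proof (cases "r < CARD('d)")
  case False
  then have "1 - (real r ^ 2 + real CARD('d) + 1) / (real CARD('d) * (real CARD('d) + 1)) \<le> 0"
    by (intro risk_bound_nonpos) simp
  moreover have "0 \<le> (\<integral>U. risk U (V (training_set U \<psi>s)) \<partial>\<mu>)"
    using haar_risk_integrable(2)[OF haar _ meas] trained by blast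
  ultimately show ?thesis by linarith
next
  case True
  interpret prob_space \<mu> using haar by (simp add: haar_unitary_def)
  let ?h = "\<lambda>U. risk U (V (training_set U \<psi>s))"
  obtain \<xi> where \<xi>: "orthonormal_fam \<xi> r"
    and span: "\<forall>\<psi>\<in>set \<psi>s. \<exists>w. \<psi> = (\<Sum>k<r. tprod (\<xi> k) (w k))"
    and phase: "\<And>U V. unitary U \<Longrightarrow> unitary V \<Longrightarrow> perfectly_trained U V \<psi>s \<Longrightarrow>
                  \<exists>\<omega>. cmod \<omega> = 1 \<and> (\<forall>k<r. (cadj U ** V) *v \<xi> k = \<omega> *s \<xi> k)"
    using T_ld_perfect_training_phase[OF \<psi>s] by blast
  obtain I :: "((nat \<Rightarrow> real) \<times> nat) set" and G where I: "finite I" "I \<noteq> {}"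
    and G: "\<And>x. x \<in> I \<Longrightarrow> unitary (G x)"
    and G\<xi>: "\<And>x k. x \<in> I \<Longrightarrow> k < r \<Longrightarrow> G x *v \<xi> k = \<xi> k"
    and design: "\<And>W \<omega>. unitary W \<Longrightarrow> cmod \<omega> = 1 \<Longrightarrow> \<forall>k<r. W *v \<xi> k = \<omega> *s \<xi> k \<Longrightarrow>
       (\<Sum>x\<in>I. (cmod (mtrace (cadj (G x) ** W)))\<^sup>2) \<le> real (card I) * ((real r)\<^sup>2 + 1)"
    using exists_unitary_design_fixing[OF \<xi> True] by blast
  have "real (card I) * (1 - (real r ^ 2 + real CARD('d) + 1) / (real CARD('d) * (real CARD('d) + 1)))
          \<le> (\<Sum>x\<in>I. ?h (U ** G x))" if U: "unitary U" for U
  proof -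
    have "unitary (V (training_set U \<psi>s))" "perfectly_trained U (V (training_set U \<psi>s)) \<psi>s"
      using trained[OF U] by auto
    then have "real (card I) * (1 - ((real r)\<^sup>2 + 1 + real CARD('d)) / (real CARD('d) * (real CARD('d) + 1)))
          \<le> (\<Sum>x\<in>I. risk (U ** G x) (V (training_set U \<psi>s)))"
      using phase[OF U] design U by (intro sum_risk_mult_right_ge) (meson unitary_cadj unitary_mult)
    moreover have "training_set (U ** G x) \<psi>s = training_set U \<psi>s" if "x \<in> I" for x
      using G\<xi>[OF that] span by (intro training_set_mult_right_fixing) auto
    ultimately show ?thesis by (simp add: add_ac)
  qed
  moreover have "integrable \<mu> ?h"
    using haar_risk_integrable(1)[OF haar _ meas] trained by blast
  ultimately show ?thesis
    using haar unfolding haar_unitary_def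
    by (intro integral_ge_of_average[OF I, where g = "\<lambda>x U. ?h (U ** G x)"])
      (auto simp: haar_integral_mult_right[OF haar G meas] elim!: eventually_mono)
qed

theorem mainTheorem3:
  fixes \<mu> :: "(complex^'d::finite^'d) measure"
    and M :: "((complex^('d \<times> 'r::finite)) list) measure"
    and V :: "((complex^('d \<times> 'r)) \<times> (complex^('d \<times> 'r))) list \<Rightarrow> complex^'d^'d"
    and r t :: nat
  assumes haar: "haar_unitary \<mu>"
    and probM: "prob_space M"
    and supp: "space M \<subseteq> T_ld r t"
    and trained: "\<And>U \<psi>s. unitary U \<Longrightarrow> \<psi>s \<in> T_ld r t \<Longrightarrow>
                    unitary (V (training_set U \<psi>s)) \<and>
                    perfectly_trained U (V (training_set U \<psi>s)) \<psi>s"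
    and meas: "(\<lambda>(\<psi>s, U). risk U (V (training_set U \<psi>s))) \<in> borel_measurable (M \<Otimes>\<^sub>M \<mu>)"
  shows "(\<integral>U. (\<integral>\<psi>s. risk U (V (training_set U \<psi>s)) \<partial>M) \<partial>\<mu>)
           \<ge> 1 - (real r ^ 2 + real CARD('d) + 1) / (real CARD('d) * (real CARD('d) + 1))"
proof -
  interpret pair_prob_space M \<mu>
    using probM haar by (simp add: pair_prob_space_def pair_sigma_finite_def prob_space_imp_sigma_finite haar_unitary_def)
  have "AE U in \<mu>. norm (risk U (V (training_set U \<psi>s))) \<le> 1" if "\<psi>s \<in> space M" for \<psi>s
    by (intro haar_AE_risk_bounds(2)[OF haar]) (use trained supp that in blast)
  moreover have "1 - (real r ^ 2 + real CARD('d) + 1) / (real CARD('d) * (real CARD('d) + 1))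
      \<le> (\<integral>U. risk U (V (training_set U \<psi>s)) \<partial>\<mu>)" if "\<psi>s \<in> space M" for \<psi>s
  proof -
    have "(\<lambda>U. risk U (V (training_set U \<psi>s))) \<in> borel_measurable \<mu>"
      using measurable_Pair2[OF meas that] by simp
    with haar_expected_risk_ge[OF haar] show ?thesis
      using supp that trained by blast
  qed
  ultimately show ?thesis
    using iterated_integral_ge_const[OF meas, where B = 1] by simp
qed

end
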